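(* Let $\Gamma=A\ast B$ with $A,B$ non-trivial, let $f=f_A\ast f_B$ be a split quasimorphism with homogenization $\widehat f$ and bounded cohomology class $\omega_f=[\partial f]_\mathrm{b}\in\mathrm{H}^2_\mathrm{b}(\Gamma,\mathbb{R})$. Then \[ \|\omega_f\|=\tfrac12\,\mathrm{def}\,\widehat f=\mathrm{def}\, f=\max\{\mathrm{def}\, f_A,\mathrm{def}\, f_B\}. \] In particular, $f$ is a minimal defect representative for its class.
   Context: A quasimorphism is a map $f:\Gamma\to\mathbb{R}$ with $\mathrm{def}\, f=\sup_{g,h}|f(gh)-f(g)-f(h)|<\infty$; it is alternating if $f(g^{-1})=-f(g)$. Its homogenization is $\widehat f(g)=\lim_{n\to\infty}f(g^n)/n$. $\omega_f$ is the class in second bounded cohomology (bounded bar complex, trivial coefficients) of the bounded 2-cocycle $\partial f(g,h)=f(g)+f(h)-f(gh)$, and the Gromov norm is $\|\omega_f\|=\inf\{\mathrm{def}\,(f+\beta):\beta:\Gamma\to\mathbb{R}\text{ bounded}\}$. Each $1\neq g\in A\ast B$ has a unique normal form $g=a_1b_1\cdots a_nb_n$ ($a_i\in A$, $b_i\in B$, all non-trivial except possibly $a_1$ or $b_n$). For alternating quasimorphisms $f_A,f_B$ on $A,B$ the split quasimorphism is $f(1)=0$, $f(a_1b_1\cdots a_nb_n)=f_A(a_1)+f_B(b_1)+\dots+f_A(a_n)+f_B(b_n)$. *)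

theory Defs
  imports Complex_Main "HOL-Algebra.Group"
begin

definition defect_set :: "('a, 'b) monoid_scheme \<Rightarrow> ('a \<Rightarrow> real) \<Rightarrow> real set" where
  "defect_set G f = {\<bar>f (g \<otimes>\<^bsub>G\<^esub> h) - f g - f h\<bar> | g h. g \<in> carrier G \<and> h \<in> carrier G}"

definition quasimorphism :: "('a, 'b) monoid_scheme \<Rightarrow> ('a \<Rightarrow> real) \<Rightarrow> bool" where
  "quasimorphism G f \<longleftrightarrow> bdd_above (defect_set G f)"

definition defect :: "('a, 'b) monoid_scheme \<Rightarrow> ('a \<Rightarrow> real) \<Rightarrow> real" where
  "defect G f = Sup (defect_set G f)"

definition alternating :: "('a, 'b) monoid_scheme \<Rightarrow> ('a \<Rightarrow> real) \<Rightarrow> bool" where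
  "alternating G f \<longleftrightarrow> (\<forall>g\<in>carrier G. f (inv\<^bsub>G\<^esub> g) = - f g)"

definition homogenization :: "('a, 'b) monoid_scheme \<Rightarrow> ('a \<Rightarrow> real) \<Rightarrow> 'a \<Rightarrow> real" where
  "homogenization G f g = lim (\<lambda>n::nat. f (g [^]\<^bsub>G\<^esub> n) / real n)"

definition bounded_fun :: "('a, 'b) monoid_scheme \<Rightarrow> ('a \<Rightarrow> real) \<Rightarrow> bool" where
  "bounded_fun G \<beta> \<longleftrightarrow> (\<exists>C. \<forall>g\<in>carrier G. \<bar>\<beta> g\<bar> \<le> C)"

text \<open>Gromov norm of the bounded class of the coboundary of f:
  infimum of the defects of f + beta over bounded beta.\<close>
definition gromov_norm_class :: "('a, 'b) monoid_scheme \<Rightarrow> ('a \<Rightarrow> real) \<Rightarrow> real" where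
  "gromov_norm_class G f = Inf {defect G (\<lambda>g. f g + \<beta> g) | \<beta>. bounded_fun G \<beta>}"

text \<open>A normal-form word a_1 b_1 ... a_n b_n, encoded as the list of pairs (a_i,b_i);
  all letters non-trivial except possibly a_1 and b_n.\<close>
definition nf_word :: "('a, 'b) monoid_scheme \<Rightarrow> 'a set \<Rightarrow> 'a set \<Rightarrow> ('a \<times> 'a) list \<Rightarrow> bool" where
  "nf_word G A B ps \<longleftrightarrow> ps \<noteq> [] \<and> set ps \<subseteq> A \<times> B
     \<and> (\<forall>i. 0 < i \<and> i < length ps \<longrightarrow> fst (ps ! i) \<noteq> \<one>\<^bsub>G\<^esub>)
     \<and> (\<forall>i. i + 1 < length ps \<longrightarrow> snd (ps ! i) \<noteq> \<one>\<^bsub>G\<^esub>)"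

definition word_prod :: "('a, 'b) monoid_scheme \<Rightarrow> ('a \<times> 'a) list \<Rightarrow> 'a" where
  "word_prod G ps = foldr (\<lambda>(a, b) acc. a \<otimes>\<^bsub>G\<^esub> b \<otimes>\<^bsub>G\<^esub> acc) ps \<one>\<^bsub>G\<^esub>"

definition is_free_product :: "('a, 'b) monoid_scheme \<Rightarrow> 'a set \<Rightarrow> 'a set \<Rightarrow> bool" where
  "is_free_product G A B \<longleftrightarrow> group G \<and> subgroup A G \<and> subgroup B G \<and>
     (\<forall>g\<in>carrier G. g \<noteq> \<one>\<^bsub>G\<^esub> \<longrightarrow> (\<exists>!ps. nf_word G A B ps \<and> word_prod G ps = g))"

definition normal_form :: "('a, 'b) monoid_scheme \<Rightarrow> 'a set \<Rightarrow> 'a set \<Rightarrow> 'a \<Rightarrow> ('a \<times> 'a) list" where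
  "normal_form G A B g = (THE ps. nf_word G A B ps \<and> word_prod G ps = g)"

definition split_qm :: "('a, 'b) monoid_scheme \<Rightarrow> 'a set \<Rightarrow> 'a set \<Rightarrow> ('a \<Rightarrow> real) \<Rightarrow> ('a \<Rightarrow> real) \<Rightarrow> 'a \<Rightarrow> real" where
  "split_qm G A B fA fB g = (if g = \<one>\<^bsub>G\<^esub> then 0
     else sum_list (map (\<lambda>(a, b). fA a + fB b) (normal_form G A B g)))"

end

theory Submission
  imports Defs
begin

text \<open>
  Write the elements of A * B as reduced words in the non-trivial elements of A and B; the split
  quasimorphism f is then the sum of fA and fB over the letters. Multiplying two reduced words
  cancels a common part, on which f is additive because fA and fB are alternating, and merges at
  most one pair of letters from the same factor; hence def f \<le> max (def fA) (def fB).
  Conversely, for x, y in one factor and b \<noteq> 1 in the other, the words g = y b x b and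
  h = b\<inverse> y b\<inverse> x are cyclically reduced and g h is conjugate to (x y) b (x y) b\<inverse>.
  The homogenization of f agrees with f on cyclically reduced words and is conjugation invariant,
  so its defect is at least twice the defects of fA and fB. The bounds
  def \<psi> \<le> 2 def \<phi> and def \<psi> / 2 \<le> \<parallel>\<omega>(\<phi>)\<parallel> \<le> def \<phi>, valid for every quasimorphism \<phi> with
  homogenization \<psi>, then force all equalities.
\<close>

section \<open>Homogenization of quasimorphisms\<close>

lemma quasimorphismI:
  assumes "\<And>g h. g \<in> carrier G \<Longrightarrow> h \<in> carrier G \<Longrightarrow> \<bar>f (g \<otimes>\<^bsub>G\<^esub> h) - f g - f h\<bar> \<le> K"
  shows "quasimorphism G f"
  using assms unfolding quasimorphism_def defect_set_def bdd_above_def by blast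

lemma abs_le_defect:
  assumes "quasimorphism G f" and "g \<in> carrier G" and "h \<in> carrier G"
  shows "\<bar>f (g \<otimes>\<^bsub>G\<^esub> h) - f g - f h\<bar> \<le> defect G f"
  using assms unfolding quasimorphism_def defect_def
  by (intro cSup_upper) (auto simp: defect_set_def)

lemma defect_le:
  assumes "carrier G \<noteq> {}"
    and "\<And>g h. g \<in> carrier G \<Longrightarrow> h \<in> carrier G \<Longrightarrow> \<bar>f (g \<otimes>\<^bsub>G\<^esub> h) - f g - f h\<bar> \<le> K"
  shows "defect G f \<le> K"
  using assms unfolding defect_def defect_set_def by (intro cSup_least) blast+

lemma homogenization_eqI:
  assumes "\<And>n. n \<ge> 1 \<Longrightarrow> f (x [^]\<^bsub>G\<^esub> n) = real n * c"
  shows "homogenization G f x = c"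
proof -
  have "(\<lambda>n. f (x [^]\<^bsub>G\<^esub> n) / real n) \<longlonglongrightarrow> c"
    by (rule tendsto_eventually) (use assms in \<open>auto intro!: eventually_sequentiallyI[of 1]\<close>)
  then show ?thesis
    unfolding homogenization_def by (rule limI)
qed

lemma abs_le_of_linear_bound:
  fixes c d K :: real
  assumes "\<And>n::nat. n \<ge> 1 \<Longrightarrow> \<bar>real n * c\<bar> \<le> real n * d + K"
  shows "\<bar>c\<bar> \<le> d"
proof (rule ccontr)
  assume "\<not> \<bar>c\<bar> \<le> d"
  then have pos: "\<bar>c\<bar> - d > 0" by simp
  obtain n :: nat where n: "n > K / (\<bar>c\<bar> - d)"
    using reals_Archimedean2 by blast
  have "real (Suc n) * (\<bar>c\<bar> - d) \<le> K"
    using assms[of "Suc n"] by (simp add: abs_mult algebra_simps)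
  moreover have "K < real n * (\<bar>c\<bar> - d)"
    using n pos by (simp add: field_simps)
  ultimately show False
    using pos by (simp add: algebra_simps)
qed

lemma (in group) mult_inv_cancel_left: "x \<in> carrier G \<Longrightarrow> y \<in> carrier G \<Longrightarrow> x \<otimes> (inv x \<otimes> y) = y"
  by (simp add: m_assoc[symmetric])

lemma (in group) inv_mult_cancel_left: "x \<in> carrier G \<Longrightarrow> y \<in> carrier G \<Longrightarrow> inv x \<otimes> (x \<otimes> y) = y"
  by (simp add: m_assoc[symmetric])

locale group_quasimorphism = group G for G (structure) +
  fixes \<phi> :: "'a \<Rightarrow> real"
  assumes quasimorphism: "quasimorphism G \<phi>"
begin

abbreviation "D \<equiv> defect G \<phi>"
abbreviation "\<psi> \<equiv> homogenization G \<phi>"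

lemma defect_bound: "x \<in> carrier G \<Longrightarrow> y \<in> carrier G \<Longrightarrow> \<bar>\<phi> (x \<otimes> y) - \<phi> x - \<phi> y\<bar> \<le> D"
  using abs_le_defect[OF quasimorphism] .

lemma defect_nonneg: "0 \<le> D"
  using defect_bound[of \<one> \<one>] by simp

lemma abs_one_le_defect: "\<bar>\<phi> \<one>\<bar> \<le> D"
  using defect_bound[of \<one> \<one>] by simp

lemma pow_mult_defect:
  assumes x: "x \<in> carrier G"
  shows "\<bar>\<phi> (x [^] (Suc k * n)) - real (Suc k) * \<phi> (x [^] n)\<bar> \<le> real k * D"
proof (induction k)
  case (Suc k)
  have "x [^] (Suc (Suc k) * n) = x [^] n \<otimes> x [^] (Suc k * n)"
    using x by (simp add: nat_pow_mult)
  moreover have "\<bar>\<phi> (x [^] n \<otimes> x [^] (Suc k * n)) - \<phi> (x [^] n) - \<phi> (x [^] (Suc k * n))\<bar> \<le> D"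
    using x by (intro defect_bound) auto
  ultimately show ?case
    using Suc by (simp add: algebra_simps abs_le_iff)
qed simp

lemma pow_quotient_close:
  assumes x: "x \<in> carrier G" and m: "m \<ge> 1" and n: "n \<ge> 1"
  shows "\<bar>\<phi> (x [^] (m * n)) / real (m * n) - \<phi> (x [^] n) / real n\<bar> \<le> D / real n"
proof -
  obtain k where k: "m = Suc k"
    using m by (cases m) auto
  have "\<bar>\<phi> (x [^] (m * n)) - real m * \<phi> (x [^] n)\<bar> \<le> real k * D"
    using pow_mult_defect[OF x, of k n] k by simp
  also have "\<dots> \<le> real m * D"
    using defect_nonneg k by (simp add: mult_right_mono)
  finally have bound: "\<bar>\<phi> (x [^] (m * n)) - real m * \<phi> (x [^] n)\<bar> \<le> real m * D" .
  have "\<bar>\<phi> (x [^] (m * n)) / real (m * n) - \<phi> (x [^] n) / real n\<bar>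
        = \<bar>\<phi> (x [^] (m * n)) - real m * \<phi> (x [^] n)\<bar> / real (m * n)"
    using m n by (simp add: field_simps)
  also have "\<dots> \<le> real m * D / real (m * n)"
    using bound by (intro divide_right_mono) auto
  also have "\<dots> = D / real n"
    using m n by simp
  finally show ?thesis .
qed

lemma Cauchy_pow_quotient:
  assumes x: "x \<in> carrier G"
  shows "Cauchy (\<lambda>n. \<phi> (x [^] n) / real n)"
proof (rule metric_CauchyI)
  fix e :: real
  assume e: "e > 0"
  obtain M :: nat where M: "M > 2 * D / e"
    using reals_Archimedean2 by blast
  have small: "2 * (D / real (Suc M)) < e"
  proof -
    have "2 * D < e * real M"
      using M e by (simp add: field_simps)
    also have "\<dots> \<le> e * real (Suc M)"
      using e by simp
    finally show ?thesis
      by (simp add: field_simps)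
  qed
  have "dist (\<phi> (x [^] m) / real m) (\<phi> (x [^] n) / real n) < e"
    if m: "Suc M \<le> m" and n: "Suc M \<le> n" for m n
  proof -
    have "\<bar>\<phi> (x [^] (n * m)) / real (n * m) - \<phi> (x [^] m) / real m\<bar> \<le> D / real m"
      "\<bar>\<phi> (x [^] (m * n)) / real (m * n) - \<phi> (x [^] n) / real n\<bar> \<le> D / real n"
      using pow_quotient_close[OF x] m n by auto
    moreover have "D / real m \<le> D / real (Suc M)" "D / real n \<le> D / real (Suc M)"
      using m n defect_nonneg by (auto intro: divide_left_mono)
    ultimately show ?thesis
      using small unfolding dist_real_def mult.commute[of n m] by linarith
  qed
  then show "\<exists>M. \<forall>m\<ge>M. \<forall>n\<ge>M. dist (\<phi> (x [^] m) / real m) (\<phi> (x [^] n) / real n) < e"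
    by blast
qed

lemma homogenization_LIMSEQ:
  assumes "x \<in> carrier G"
  shows "(\<lambda>n. \<phi> (x [^] n) / real n) \<longlonglongrightarrow> \<psi> x"
  using Cauchy_pow_quotient[OF assms] unfolding homogenization_def
  by (simp add: Cauchy_convergent_iff convergent_LIMSEQ_iff)

lemma pow_homogenization_dist:
  assumes x: "x \<in> carrier G"
  shows "\<bar>\<phi> (x [^] n) - real n * \<psi> x\<bar> \<le> D"
proof (cases "n = 0")
  case True
  then show ?thesis
    using abs_one_le_defect by simp
next
  case False
  let ?s = "\<lambda>k. \<phi> (x [^] k) / real k"
  have "strict_mono (\<lambda>m. Suc m * n)"
    using False by (simp add: strict_mono_def)
  from LIMSEQ_subseq_LIMSEQ[OF homogenization_LIMSEQ[OF x] this]
  have "(\<lambda>m. \<bar>?s (Suc m * n) - ?s n\<bar>) \<longlonglongrightarrow> \<bar>\<psi> x - ?s n\<bar>"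
    by (intro tendsto_intros) (simp add: o_def)
  moreover have "\<bar>?s (Suc m * n) - ?s n\<bar> \<le> D / real n" for m
    using pow_quotient_close[OF x, of "Suc m" n] False by simp
  ultimately have "\<bar>\<psi> x - ?s n\<bar> \<le> D / real n"
    by (intro LIMSEQ_le_const2) auto
  then have "real n * \<bar>\<psi> x - ?s n\<bar> \<le> D"
    using False by (simp add: field_simps)
  moreover have "real n * \<bar>\<psi> x - ?s n\<bar> = \<bar>\<phi> (x [^] n) - real n * \<psi> x\<bar>"
    using False by (simp add: abs_mult[symmetric] field_simps abs_minus_commute)
  ultimately show ?thesis
    by simp
qed

lemma conj_defect:
  assumes c: "c \<in> carrier G" and y: "y \<in> carrier G"
  shows "\<bar>\<phi> (c \<otimes> y \<otimes> inv c) - \<phi> y\<bar> \<le> 4 * D"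
proof -
  have "\<bar>\<phi> (c \<otimes> y \<otimes> inv c) - \<phi> (c \<otimes> y) - \<phi> (inv c)\<bar> \<le> D"
    "\<bar>\<phi> (c \<otimes> y) - \<phi> c - \<phi> y\<bar> \<le> D"
    "\<bar>\<phi> (c \<otimes> inv c) - \<phi> c - \<phi> (inv c)\<bar> \<le> D"
    using c y by (intro defect_bound; simp)+
  then show ?thesis
    using c abs_one_le_defect by (simp add: abs_le_iff)
qed

lemma commutator_defect:
  assumes a: "a \<in> carrier G" and b: "b \<in> carrier G"
  shows "\<bar>\<phi> (a \<otimes> b \<otimes> inv a \<otimes> inv b)\<bar> \<le> 3 * D"
proof -
  define p where "p = a \<otimes> b \<otimes> inv a"
  define k where "k = a \<otimes> b \<otimes> inv a \<otimes> inv b"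
  have p: "p \<in> carrier G" and k: "k \<in> carrier G"
    using a b by (auto simp: p_def k_def)
  have "p \<otimes> a = a \<otimes> b" and "k \<otimes> b = p"
    using a b by (simp_all add: p_def k_def m_assoc)
  moreover have "\<bar>\<phi> (a \<otimes> b) - \<phi> a - \<phi> b\<bar> \<le> D"
    "\<bar>\<phi> (p \<otimes> a) - \<phi> p - \<phi> a\<bar> \<le> D"
    "\<bar>\<phi> (k \<otimes> b) - \<phi> k - \<phi> b\<bar> \<le> D"
    using a b p k by (intro defect_bound; simp)+
  ultimately show ?thesis
    unfolding k_def[symmetric] by (simp add: abs_le_iff)
qed

lemma conj_pow:
  assumes c: "c \<in> carrier G" and y: "y \<in> carrier G"
  shows "(c \<otimes> y \<otimes> inv c) [^] (n::nat) = c \<otimes> y [^] n \<otimes> inv c"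
  by (induction n) (use c y in \<open>simp_all add: m_assoc mult_inv_cancel_left inv_mult_cancel_left\<close>)

lemma homogenization_conj:
  assumes c: "c \<in> carrier G" and y: "y \<in> carrier G"
  shows "\<psi> (c \<otimes> y \<otimes> inv c) = \<psi> y"
proof -
  have "\<bar>real n * (\<psi> (c \<otimes> y \<otimes> inv c) - \<psi> y)\<bar> \<le> real n * 0 + 6 * D" for n
  proof -
    have "\<bar>\<phi> ((c \<otimes> y \<otimes> inv c) [^] n) - real n * \<psi> (c \<otimes> y \<otimes> inv c)\<bar> \<le> D"
      using c y by (intro pow_homogenization_dist) auto
    moreover have "\<bar>\<phi> (y [^] n) - real n * \<psi> y\<bar> \<le> D"
      using y by (rule pow_homogenization_dist)
    moreover have "\<bar>\<phi> (c \<otimes> y [^] n \<otimes> inv c) - \<phi> (y [^] n)\<bar> \<le> 4 * D"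
      using c y by (intro conj_defect) auto
    ultimately show ?thesis
      unfolding conj_pow[OF c y] by (simp add: abs_le_iff algebra_simps)
  qed
  then have "\<bar>\<psi> (c \<otimes> y \<otimes> inv c) - \<psi> y\<bar> \<le> 0"
    by (rule abs_le_of_linear_bound)
  then show ?thesis
    by simp
qed

definition conj_bounded :: "'a \<Rightarrow> real \<Rightarrow> bool" where
  "conj_bounded q r \<longleftrightarrow> q \<in> carrier G \<and> (\<forall>c\<in>carrier G. \<bar>\<phi> (c \<otimes> q \<otimes> inv c)\<bar> \<le> r)"

lemma conj_bounded_one: "conj_bounded \<one> D"
  using abs_one_le_defect by (simp add: conj_bounded_def)

lemma conj_bounded_commutator:
  assumes a: "a \<in> carrier G" and b: "b \<in> carrier G"
  shows "conj_bounded (a \<otimes> b \<otimes> inv a \<otimes> inv b) (3 * D)"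
proof -
  have "c \<otimes> (a \<otimes> b \<otimes> inv a \<otimes> inv b) \<otimes> inv c
      = (c \<otimes> a \<otimes> inv c) \<otimes> (c \<otimes> b \<otimes> inv c) \<otimes> inv (c \<otimes> a \<otimes> inv c) \<otimes> inv (c \<otimes> b \<otimes> inv c)"
    if c: "c \<in> carrier G" for c
    using a b c by (simp add: inv_mult_group m_assoc mult_inv_cancel_left inv_mult_cancel_left)
  then show ?thesis
    using commutator_defect a b by (simp add: conj_bounded_def)
qed

lemma conj_bounded_conj:
  assumes q: "conj_bounded q r" and x: "x \<in> carrier G"
  shows "conj_bounded (x \<otimes> q \<otimes> inv x) r"
proof -
  have "c \<otimes> (x \<otimes> q \<otimes> inv x) \<otimes> inv c = (c \<otimes> x) \<otimes> q \<otimes> inv (c \<otimes> x)"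
    if "c \<in> carrier G" for c
    using that x q by (simp add: conj_bounded_def m_assoc inv_mult_group)
  then show ?thesis
    using q x by (simp add: conj_bounded_def)
qed

lemma conj_bounded_mult:
  assumes p: "conj_bounded p r" and q: "conj_bounded q s"
  shows "conj_bounded (p \<otimes> q) (r + s + D)"
  unfolding conj_bounded_def
proof (intro conjI ballI)
  show "p \<otimes> q \<in> carrier G"
    using p q by (simp add: conj_bounded_def)
  fix c
  assume c: "c \<in> carrier G"
  have "c \<otimes> (p \<otimes> q) \<otimes> inv c = (c \<otimes> p \<otimes> inv c) \<otimes> (c \<otimes> q \<otimes> inv c)"
    using c p q by (simp add: conj_bounded_def m_assoc inv_mult_cancel_left)
  moreover have "\<bar>\<phi> ((c \<otimes> p \<otimes> inv c) \<otimes> (c \<otimes> q \<otimes> inv c)) - \<phi> (c \<otimes> p \<otimes> inv c) - \<phi> (c \<otimes> q \<otimes> inv c)\<bar> \<le> D"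
    using c p q by (intro defect_bound) (simp_all add: conj_bounded_def)
  moreover have "\<bar>\<phi> (c \<otimes> p \<otimes> inv c)\<bar> \<le> r" and "\<bar>\<phi> (c \<otimes> q \<otimes> inv c)\<bar> \<le> s"
    using c p q by (simp_all add: conj_bounded_def)
  ultimately show "\<bar>\<phi> (c \<otimes> (p \<otimes> q) \<otimes> inv c)\<bar> \<le> r + s + D"
    by (simp add: abs_le_iff)
qed

lemma commutator_shift_identity:
  fixes n :: nat
  assumes g: "g \<in> carrier G" and h: "h \<in> carrier G"
  defines "a \<equiv> g \<otimes> h \<otimes> h" and "b \<equiv> inv h \<otimes> g [^] n"
  shows "(g \<otimes> h) \<otimes> (g [^] n \<otimes> h [^] n) \<otimes> (g \<otimes> h)
     = (a \<otimes> b \<otimes> inv a \<otimes> inv b) \<otimes> (inv (g \<otimes> h) \<otimes> (g [^] Suc (Suc n) \<otimes> h [^] Suc (Suc n)) \<otimes> (g \<otimes> h))"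
proof -
  have "g [^] Suc (Suc n) = g \<otimes> g [^] n \<otimes> g"
    using g by (metis nat_pow_Suc nat_pow_Suc2)
  moreover have "h [^] Suc (Suc n) = h \<otimes> (h \<otimes> h [^] n)"
    using h by (metis nat_pow_Suc2)
  ultimately show ?thesis
    unfolding a_def b_def using g h
    by (simp add: inv_mult_group m_assoc mult_inv_cancel_left inv_mult_cancel_left)
qed

text \<open>(g h)^2m is a conjugate of g^2m h^2m times a product of m commutators, and conjugates
  of that product have \<phi>-value O(m D); this gives the sharp constant 2 in the next lemmas.\<close>
lemma even_pow_decomposition:
  assumes g: "g \<in> carrier G" and h: "h \<in> carrier G"
  shows "\<exists>q. conj_bounded q (4 * real m * D + D) \<and>
    (g \<otimes> h) [^] (2 * m) = q \<otimes> (inv (g \<otimes> h) \<otimes> (g [^] (2 * m) \<otimes> h [^] (2 * m)) \<otimes> (g \<otimes> h))"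
proof (induction m)
  case 0
  show ?case
    using conj_bounded_one g h by (intro exI[of _ \<one>]) (simp add: m_assoc)
next
  case (Suc m)
  then obtain q where q: "conj_bounded q (4 * real m * D + D)"
    and q_eq: "(g \<otimes> h) [^] (2 * m) = q \<otimes> (inv (g \<otimes> h) \<otimes> (g [^] (2 * m) \<otimes> h [^] (2 * m)) \<otimes> (g \<otimes> h))"
    by blast
  define x where "x = (g \<otimes> h) \<otimes> (g \<otimes> h)"
  define a where "a = g \<otimes> h \<otimes> h"
  define b where "b = inv h \<otimes> g [^] (2 * m)"
  have x: "x \<in> carrier G" and ab: "a \<in> carrier G" "b \<in> carrier G"
    using g h by (auto simp: x_def a_def b_def)
  have qG: "q \<in> carrier G"
    using q by (simp add: conj_bounded_def)
  have "(g \<otimes> h) [^] (2 * Suc m) = (g \<otimes> h) [^] (2::nat) \<otimes> (g \<otimes> h) [^] (2 * m)"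
    using g h by (simp only: nat_pow_mult m_closed mult_Suc_right)
  also have "\<dots> = x \<otimes> (g \<otimes> h) [^] (2 * m)"
    using g h by (simp add: x_def numeral_2_eq_2 del: nat_pow_Suc)
  also have "\<dots> = (x \<otimes> q \<otimes> inv x) \<otimes> ((g \<otimes> h) \<otimes> (g [^] (2 * m) \<otimes> h [^] (2 * m)) \<otimes> (g \<otimes> h))"
    unfolding q_eq x_def using g h qG
    by (simp add: m_assoc inv_mult_group mult_inv_cancel_left inv_mult_cancel_left)
  also have "\<dots> = ((x \<otimes> q \<otimes> inv x) \<otimes> (a \<otimes> b \<otimes> inv a \<otimes> inv b))
      \<otimes> (inv (g \<otimes> h) \<otimes> (g [^] (2 * Suc m) \<otimes> h [^] (2 * Suc m)) \<otimes> (g \<otimes> h))"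
    using commutator_shift_identity[OF g h, of "2 * m"] g h x qG
    by (simp add: a_def b_def m_assoc)
  finally show ?case
    using conj_bounded_mult[OF conj_bounded_conj[OF q x] conj_bounded_commutator[OF ab]]
    by (intro exI[of _ "(x \<otimes> q \<otimes> inv x) \<otimes> (a \<otimes> b \<otimes> inv a \<otimes> inv b)"]) (simp add: algebra_simps)
qed

lemma even_pow_defect:
  assumes g: "g \<in> carrier G" and h: "h \<in> carrier G"
  shows "\<bar>\<phi> ((g \<otimes> h) [^] (2 * m)) - \<phi> (g [^] (2 * m)) - \<phi> (h [^] (2 * m))\<bar> \<le> 4 * real m * D + 7 * D"
proof -
  obtain q where q: "conj_bounded q (4 * real m * D + D)"
    and q_eq: "(g \<otimes> h) [^] (2 * m) = q \<otimes> (inv (g \<otimes> h) \<otimes> (g [^] (2 * m) \<otimes> h [^] (2 * m)) \<otimes> (g \<otimes> h))"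
    using even_pow_decomposition[OF g h] by blast
  define s where "s = g [^] (2 * m) \<otimes> h [^] (2 * m)"
  define u where "u = inv (g \<otimes> h) \<otimes> s \<otimes> (g \<otimes> h)"
  have s: "s \<in> carrier G" and u: "u \<in> carrier G" and qG: "q \<in> carrier G"
    using g h q by (auto simp: s_def u_def conj_bounded_def)
  have "\<bar>\<phi> q\<bar> \<le> 4 * real m * D + D"
    using q qG unfolding conj_bounded_def by (metis l_one one_closed inv_one r_one)
  moreover have "\<bar>\<phi> (q \<otimes> u) - \<phi> q - \<phi> u\<bar> \<le> D"
    using qG u by (rule defect_bound)
  moreover have "\<bar>\<phi> u - \<phi> s\<bar> \<le> 4 * D"
    using conj_defect[of "inv (g \<otimes> h)" s] g h s by (simp add: u_def)
  moreover have "\<bar>\<phi> s - \<phi> (g [^] (2 * m)) - \<phi> (h [^] (2 * m))\<bar> \<le> D"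
    unfolding s_def using g h by (intro defect_bound) auto
  ultimately show ?thesis
    unfolding q_eq s_def[symmetric] u_def[symmetric] by (simp add: abs_le_iff)
qed

lemma homogenization_defect_bound:
  assumes g: "g \<in> carrier G" and h: "h \<in> carrier G"
  shows "\<bar>\<psi> (g \<otimes> h) - \<psi> g - \<psi> h\<bar> \<le> 2 * D"
proof -
  have "\<bar>real m * (2 * (\<psi> (g \<otimes> h) - \<psi> g - \<psi> h))\<bar> \<le> real m * (4 * D) + 10 * D" for m
  proof -
    have "\<bar>\<phi> ((g \<otimes> h) [^] (2 * m)) - real (2 * m) * \<psi> (g \<otimes> h)\<bar> \<le> D"
      "\<bar>\<phi> (g [^] (2 * m)) - real (2 * m) * \<psi> g\<bar> \<le> D"
      "\<bar>\<phi> (h [^] (2 * m)) - real (2 * m) * \<psi> h\<bar> \<le> D"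
      using g h by (intro pow_homogenization_dist; simp)+
    then show ?thesis
      using even_pow_defect[OF g h, of m] by (simp add: abs_le_iff algebra_simps)
  qed
  then have "\<bar>2 * (\<psi> (g \<otimes> h) - \<psi> g - \<psi> h)\<bar> \<le> 4 * D"
    by (rule abs_le_of_linear_bound)
  then show ?thesis
    by simp
qed

lemma quasimorphism_homogenization: "quasimorphism G \<psi>"
  using homogenization_defect_bound by (rule quasimorphismI)

lemma defect_homogenization_le: "defect G \<psi> \<le> 2 * D"
  using homogenization_defect_bound by (intro defect_le) auto

lemma quasimorphism_add_bounded:
  assumes "bounded_fun G \<beta>"
  shows "quasimorphism G (\<lambda>g. \<phi> g + \<beta> g)"
proof -
  obtain C where C: "\<And>g. g \<in> carrier G \<Longrightarrow> \<bar>\<beta> g\<bar> \<le> C"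
    using assms unfolding bounded_fun_def by blast
  have "\<bar>\<phi> (g \<otimes> h) + \<beta> (g \<otimes> h) - (\<phi> g + \<beta> g) - (\<phi> h + \<beta> h)\<bar> \<le> D + 3 * C"
    if "g \<in> carrier G" "h \<in> carrier G" for g h
    using defect_bound[OF that] C[of "g \<otimes> h"] C[of g] C[of h] that by (simp add: abs_le_iff)
  then show ?thesis
    by (rule quasimorphismI)
qed

lemma homogenization_add_bounded:
  assumes "bounded_fun G \<beta>" and x: "x \<in> carrier G"
  shows "homogenization G (\<lambda>g. \<phi> g + \<beta> g) x = \<psi> x"
proof -
  obtain C where C: "\<And>g. g \<in> carrier G \<Longrightarrow> \<bar>\<beta> g\<bar> \<le> C"
    using assms unfolding bounded_fun_def by blast
  have "(\<lambda>n. \<beta> (x [^] n) / real n) \<longlonglongrightarrow> 0"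
  proof (rule tendsto_sandwich[of "\<lambda>n. - C / real n" _ _ "\<lambda>n. C / real n"])
    have "- C \<le> \<beta> (x [^] n)" and "\<beta> (x [^] n) \<le> C" for n :: nat
      using C[of "x [^] n"] x by (simp_all add: abs_le_iff)
    then show "\<forall>\<^sub>F n in sequentially. - C / real n \<le> \<beta> (x [^] n) / real n"
      and "\<forall>\<^sub>F n in sequentially. \<beta> (x [^] n) / real n \<le> C / real n"
      by (intro always_eventually allI divide_right_mono; simp)+
    show "(\<lambda>n. - C / real n) \<longlonglongrightarrow> 0" and "(\<lambda>n. C / real n) \<longlonglongrightarrow> 0"
      using lim_const_over_n[of "- C"] lim_const_over_n[of C] by simp_all
  qed
  from tendsto_add[OF homogenization_LIMSEQ[OF x] this]
  have "(\<lambda>n. (\<phi> (x [^] n) + \<beta> (x [^] n)) / real n) \<longlonglongrightarrow> \<psi> x"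
    by (simp add: add_divide_distrib)
  then show ?thesis
    unfolding homogenization_def[of G "\<lambda>g. \<phi> g + \<beta> g"] by (rule limI)
qed

lemma defect_homogenization_le_add_bounded:
  assumes \<beta>: "bounded_fun G \<beta>"
  shows "defect G \<psi> \<le> 2 * defect G (\<lambda>g. \<phi> g + \<beta> g)"
proof -
  interpret perturbed: group_quasimorphism G "\<lambda>g. \<phi> g + \<beta> g"
    using quasimorphism_add_bounded[OF \<beta>] by unfold_locales
  show ?thesis
    using perturbed.homogenization_defect_bound homogenization_add_bounded[OF \<beta>]
    by (intro defect_le) auto
qed

lemma gromov_norm_class_ge: "defect G \<psi> / 2 \<le> gromov_norm_class G \<phi>"
proof -
  have "bounded_fun G (\<lambda>_. 0)"
    by (auto simp: bounded_fun_def)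
  then show ?thesis
    unfolding gromov_norm_class_def using defect_homogenization_le_add_bounded
    by (intro cInf_greatest) force+
qed

lemma gromov_norm_class_le_defect: "gromov_norm_class G \<phi> \<le> D"
proof -
  have "bounded_fun G (\<lambda>_. 0)"
    by (auto simp: bounded_fun_def)
  moreover have "bdd_below {defect G (\<lambda>g. \<phi> g + \<beta> g) |\<beta>. bounded_fun G \<beta>}"
    using defect_homogenization_le_add_bounded
    by (intro bdd_belowI[of _ "defect G \<psi> / 2"]) force
  ultimately show ?thesis
    unfolding gromov_norm_class_def by (intro cInf_lower2[of D]) (auto intro!: exI[of _ "\<lambda>_. 0"])
qed

end

section \<open>The split quasimorphism on a free product\<close>

locale free_product_split = group G for G (structure) +
  fixes A B :: "'a set" and fA fB :: "'a \<Rightarrow> real"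
  assumes free_product: "is_free_product G A B"
    and quasimorphism_A: "quasimorphism (G\<lparr>carrier := A\<rparr>) fA"
    and alternating_A: "alternating (G\<lparr>carrier := A\<rparr>) fA"
    and quasimorphism_B: "quasimorphism (G\<lparr>carrier := B\<rparr>) fB"
    and alternating_B: "alternating (G\<lparr>carrier := B\<rparr>) fB"
begin

abbreviation "f \<equiv> split_qm G A B fA fB"
abbreviation "DA \<equiv> defect (G\<lparr>carrier := A\<rparr>) fA"
abbreviation "DB \<equiv> defect (G\<lparr>carrier := B\<rparr>) fB"

lemma subgroup_A: "subgroup A G" and subgroup_B: "subgroup B G"
  using free_product by (auto simp: is_free_product_def)

lemmas A_one = subgroup.one_closed[OF subgroup_A]
  and A_carrier = subgroup.mem_carrier[OF subgroup_A]
  and A_mult = subgroup.m_closed[OF subgroup_A]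
  and A_inv = subgroup.m_inv_closed[OF subgroup_A]
  and B_one = subgroup.one_closed[OF subgroup_B]
  and B_carrier = subgroup.mem_carrier[OF subgroup_B]
  and B_mult = subgroup.m_closed[OF subgroup_B]
  and B_inv = subgroup.m_inv_closed[OF subgroup_B]

lemma normal_form_unique:
  assumes "g \<in> carrier G" "g \<noteq> \<one>"
    and "nf_word G A B ps" "word_prod G ps = g" "nf_word G A B qs" "word_prod G qs = g"
  shows "ps = qs"
  using free_product assms unfolding is_free_product_def by blast

lemma nf_word_single: "a \<in> A \<Longrightarrow> b \<in> B \<Longrightarrow> nf_word G A B [(a, b)]"
  by (simp add: nf_word_def)

lemma word_prod_Cons [simp]:
  "word_prod G [] = \<one>" "word_prod G ((a, b) # ps) = a \<otimes> b \<otimes> word_prod G ps"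
  by (simp_all add: word_prod_def)

lemma factors_disjoint: "x \<in> A \<Longrightarrow> x \<in> B \<Longrightarrow> x = \<one>"
proof (rule ccontr)
  assume x: "x \<in> A" "x \<in> B" "x \<noteq> \<one>"
  then have "[(x, \<one>)] = [(\<one>, x)]"
    using A_one B_one A_carrier[of x]
    by (intro normal_form_unique[of x]) (simp_all add: nf_word_single)
  with x show False
    by simp
qed

lemma fA_inv: "x \<in> A \<Longrightarrow> fA (inv x) = - fA x"
  using alternating_A by (simp add: alternating_def m_inv_consistent[OF subgroup_A])

lemma fB_inv: "x \<in> B \<Longrightarrow> fB (inv x) = - fB x"
  using alternating_B by (simp add: alternating_def m_inv_consistent[OF subgroup_B])

lemma fA_one: "fA \<one> = 0"
  using fA_inv[OF A_one] by simp

lemma fB_one: "fB \<one> = 0"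
  using fB_inv[OF B_one] by simp

lemma fA_defect_bound: "x \<in> A \<Longrightarrow> y \<in> A \<Longrightarrow> \<bar>fA (x \<otimes> y) - fA x - fA y\<bar> \<le> DA"
  using abs_le_defect[OF quasimorphism_A] by simp

lemma fB_defect_bound: "x \<in> B \<Longrightarrow> y \<in> B \<Longrightarrow> \<bar>fB (x \<otimes> y) - fB x - fB y\<bar> \<le> DB"
  using abs_le_defect[OF quasimorphism_B] by simp

definition letter :: "'a \<Rightarrow> bool" where
  "letter x \<longleftrightarrow> (x \<in> A \<or> x \<in> B) \<and> x \<noteq> \<one>"

definition same_factor :: "'a \<Rightarrow> 'a \<Rightarrow> bool" where
  "same_factor x y \<longleftrightarrow> (x \<in> A \<and> y \<in> A) \<or> (x \<in> B \<and> y \<in> B)"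

definition f_letter :: "'a \<Rightarrow> real" where
  "f_letter x = (if x \<in> A then fA x else fB x)"

lemma letter_carrier: "letter x \<Longrightarrow> x \<in> carrier G"
  unfolding letter_def using A_carrier B_carrier by blast

lemma same_factor_iff: "letter x \<Longrightarrow> letter y \<Longrightarrow> same_factor x y \<longleftrightarrow> (x \<in> A \<longleftrightarrow> y \<in> A)"
  unfolding letter_def same_factor_def using factors_disjoint by blast

lemma same_factor_commute: "same_factor x y \<longleftrightarrow> same_factor y x"
  unfolding same_factor_def by blast

lemma letter_inv: "letter x \<Longrightarrow> letter (inv x) \<and> (inv x \<in> A \<longleftrightarrow> x \<in> A)"
  unfolding letter_def using A_inv B_inv A_carrier B_carrier by (metis inv_inv inv_one)

lemma letter_mult:
  "letter x \<Longrightarrow> letter y \<Longrightarrow> same_factor x y \<Longrightarrow> x \<otimes> y \<noteq> \<one> \<Longrightarrow> letter (x \<otimes> y) \<and> (x \<otimes> y \<in> A \<longleftrightarrow> x \<in> A)"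
  unfolding letter_def same_factor_def using A_mult B_mult factors_disjoint by blast

lemma f_letter_A: "x \<in> A \<Longrightarrow> f_letter x = fA x"
  by (simp add: f_letter_def)

lemma f_letter_B: "x \<in> B \<Longrightarrow> f_letter x = fB x"
  using factors_disjoint fA_one fB_one by (auto simp: f_letter_def)

lemma f_letter_inv: "x \<in> A \<or> x \<in> B \<Longrightarrow> f_letter (inv x) = - f_letter x"
  using f_letter_A f_letter_B fA_inv fB_inv A_inv B_inv by auto

lemma f_letter_merge:
  assumes "same_factor x y"
  shows "\<bar>f_letter (x \<otimes> y) - f_letter x - f_letter y\<bar> \<le> max DA DB"
proof -
  consider "x \<in> A" "y \<in> A" | "x \<in> B" "y \<in> B"
    using assms unfolding same_factor_def by blast
  then show ?thesis
  proof cases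
    case 1
    then show ?thesis
      using fA_defect_bound[OF 1] A_mult[OF 1] by (simp add: f_letter_A)
  next
    case 2
    then show ?thesis
      using fB_defect_bound[OF 2] B_mult[OF 2] by (simp add: f_letter_B)
  qed
qed

fun reduced :: "'a list \<Rightarrow> bool" where
  "reduced [] = True"
| "reduced [x] = letter x"
| "reduced (x # y # ws) = (letter x \<and> \<not> same_factor x y \<and> reduced (y # ws))"

definition word_mult :: "'a list \<Rightarrow> 'a" where
  "word_mult ws = foldr (\<otimes>) ws \<one>"

definition word_value :: "'a list \<Rightarrow> real" where
  "word_value ws = sum_list (map f_letter ws)"

lemma word_mult_simps [simp]: "word_mult [] = \<one>" "word_mult (x # ws) = x \<otimes> word_mult ws"
  by (simp_all add: word_mult_def)

lemma word_value_simps [simp]: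
  "word_value [] = 0" "word_value (x # ws) = f_letter x + word_value ws"
  "word_value (xs @ ys) = word_value xs + word_value ys"
  by (simp_all add: word_value_def)

lemma word_mult_closed: "set ws \<subseteq> carrier G \<Longrightarrow> word_mult ws \<in> carrier G"
  by (induction ws) auto

lemma word_mult_append:
  "set xs \<subseteq> carrier G \<Longrightarrow> set ys \<subseteq> carrier G \<Longrightarrow> word_mult (xs @ ys) = word_mult xs \<otimes> word_mult ys"
  by (induction xs) (auto simp: m_assoc word_mult_closed)

lemma reduced_Cons:
  "reduced (x # ws) \<longleftrightarrow> letter x \<and> reduced ws \<and> (ws \<noteq> [] \<longrightarrow> \<not> same_factor x (hd ws))"
  by (cases ws) auto

lemma reduced_append:
  "reduced (xs @ ys) \<longleftrightarrow>
     reduced xs \<and> reduced ys \<and> (xs \<noteq> [] \<longrightarrow> ys \<noteq> [] \<longrightarrow> \<not> same_factor (last xs) (hd ys))"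
  by (induction xs rule: reduced.induct) (auto simp: reduced_Cons)

lemma reduced_letter: "reduced ws \<Longrightarrow> x \<in> set ws \<Longrightarrow> letter x"
  by (induction ws rule: reduced.induct) auto

lemma reduced_carrier: "reduced ws \<Longrightarrow> set ws \<subseteq> carrier G"
  using reduced_letter letter_carrier by blast

fun nf_pairs :: "'a list \<Rightarrow> ('a \<times> 'a) list" where
  "nf_pairs [] = []"
| "nf_pairs [x] = (if x \<in> A then [(x, \<one>)] else [(\<one>, x)])"
| "nf_pairs (x # y # ws) = (if x \<in> A then (x, y) # nf_pairs ws else (\<one>, x) # nf_pairs (y # ws))"

lemma fst_hd_nf_pairs: "ws \<noteq> [] \<Longrightarrow> fst (hd (nf_pairs ws)) = (if hd ws \<in> A then hd ws else \<one>)"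
  by (cases ws rule: nf_pairs.cases) auto

lemma nf_word_Cons:
  assumes "a \<in> A" "b \<in> B" "b \<noteq> \<one>" "nf_word G A B ps" "fst (hd ps) \<noteq> \<one>"
  shows "nf_word G A B ((a, b) # ps)"
proof -
  have "fst (ps ! j) \<noteq> \<one>" if "j < length ps" for j
    using assms that unfolding nf_word_def by (cases j) (auto simp: hd_conv_nth)
  then show ?thesis
    using assms unfolding nf_word_def by (auto simp: nth_Cons')
qed

lemma nf_word_nf_pairs: "reduced ws \<Longrightarrow> ws \<noteq> [] \<Longrightarrow> nf_word G A B (nf_pairs ws)"
proof (induction ws rule: nf_pairs.induct)
  case (2 x)
  then show ?case
    using A_one B_one by (auto simp: letter_def nf_word_single)
next
  case (3 x y ws)
  then have x: "letter x" and y: "letter y" and xy: "(x \<in> A) \<longleftrightarrow> y \<notin> A"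
    and ws: "reduced (y # ws)"
    using same_factor_iff by (auto simp: reduced_Cons)
  show ?case
  proof (cases "x \<in> A")
    case True
    then have "y \<in> B" and "y \<noteq> \<one>"
      using y xy by (auto simp: letter_def)
    moreover have "nf_word G A B (nf_pairs ws) \<and> fst (hd (nf_pairs ws)) \<noteq> \<one>" if "ws \<noteq> []"
    proof -
      have "letter (hd ws)" and "hd ws \<in> A"
        using ws that y xy True same_factor_iff[OF y] reduced_letter[of ws "hd ws"]
        by (auto simp: reduced_Cons)
      then show ?thesis
        using "3.IH"(1) True ws that fst_hd_nf_pairs[OF that] by (auto simp: reduced_Cons letter_def)
    qed
    ultimately show ?thesis
      using True by (cases "ws = []") (auto intro: nf_word_Cons simp: nf_word_single)
  next
    case False
    then have "x \<in> B" and "x \<noteq> \<one>" and "y \<in> A"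
      using x xy by (auto simp: letter_def)
    then show ?thesis
      using False "3.IH"(2) ws fst_hd_nf_pairs[of "y # ws"] y A_one
      by (auto intro!: nf_word_Cons simp: letter_def)
  qed
qed simp

lemma word_prod_nf_pairs: "set ws \<subseteq> carrier G \<Longrightarrow> word_prod G (nf_pairs ws) = word_mult ws"
  by (induction ws rule: nf_pairs.induct) (auto simp: m_assoc word_mult_closed)

lemma nf_pairs_value:
  "reduced ws \<Longrightarrow> sum_list (map (\<lambda>(a, b). fA a + fB b) (nf_pairs ws)) = word_value ws"
proof (induction ws rule: nf_pairs.induct)
  case (3 x y ws)
  then have "y \<in> B" if "x \<in> A"
    using that same_factor_iff[of x y] by (auto simp: letter_def reduced_Cons)
  moreover have "x \<in> B" if "x \<notin> A"
    using that 3 by (auto simp: letter_def)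
  ultimately show ?case
    using 3 by (auto simp: reduced_Cons f_letter_A f_letter_B fA_one fB_one)
qed (auto simp: letter_def f_letter_A f_letter_B fA_one fB_one)

lemma word_mult_ne_one:
  assumes "reduced ws" and "ws \<noteq> []"
  shows "word_mult ws \<noteq> \<one>"
proof
  assume one: "word_mult ws = \<one>"
  obtain x t where ws: "ws = x # t"
    using assms(2) by (cases ws) auto
  have x: "letter x" and t: "reduced t" and xt: "t \<noteq> [] \<Longrightarrow> \<not> same_factor x (hd t)"
    using assms(1) by (auto simp: ws reduced_Cons)
  have xG: "x \<in> carrier G" and tG: "set t \<subseteq> carrier G"
    using x t letter_carrier reduced_carrier by auto
  have "t \<noteq> []"
    using one x xG by (auto simp: ws letter_def)
  have inv_x: "letter (inv x)" "inv x \<in> A \<longleftrightarrow> x \<in> A"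
    using letter_inv[OF x] by auto
  have "word_mult t = inv x"
    using one xG word_mult_closed[OF tG] inv_mult_cancel_left[of x "word_mult t"] by (simp add: ws)
  then have "nf_pairs t = nf_pairs [inv x]"
    using normal_form_unique[of "inv x"] nf_word_nf_pairs[OF t \<open>t \<noteq> []\<close>] inv_x xG tG
      nf_word_nf_pairs[of "[inv x]"] word_prod_nf_pairs[of t] word_prod_nf_pairs[of "[inv x]"]
    by (auto simp: letter_def)
  then have "(if hd t \<in> A then hd t else \<one>) = (if inv x \<in> A then inv x else \<one>)"
    using fst_hd_nf_pairs[OF \<open>t \<noteq> []\<close>] fst_hd_nf_pairs[of "[inv x]"] by simp
  moreover have "letter (hd t)" and "hd t \<in> A \<longleftrightarrow> x \<notin> A"
    using t xt \<open>t \<noteq> []\<close> reduced_letter[of t "hd t"] same_factor_iff[OF x] by auto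
  ultimately show False
    using inv_x by (auto simp: letter_def split: if_splits)
qed

lemma normal_form_word_mult:
  assumes "reduced ws" and "ws \<noteq> []"
  shows "normal_form G A B (word_mult ws) = nf_pairs ws"
  unfolding normal_form_def
proof (rule the_equality)
  have "set ws \<subseteq> carrier G"
    using assms(1) by (rule reduced_carrier)
  then show nf: "nf_word G A B (nf_pairs ws) \<and> word_prod G (nf_pairs ws) = word_mult ws"
    using nf_word_nf_pairs[OF assms] word_prod_nf_pairs by simp
  show "ps = nf_pairs ws" if "nf_word G A B ps \<and> word_prod G ps = word_mult ws" for ps
    using normal_form_unique[OF _ word_mult_ne_one[OF assms]] that nf
      word_mult_closed[OF \<open>set ws \<subseteq> carrier G\<close>] by blast
qed

lemma split_qm_word_mult: "reduced ws \<Longrightarrow> f (word_mult ws) = word_value ws"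
  using word_mult_ne_one normal_form_word_mult nf_pairs_value by (cases "ws = []") (simp_all add: split_qm_def)

lemma reduced_merge:
  assumes us: "reduced (us @ [x])" and vs: "reduced (y # vs)"
    and xy: "same_factor x y" "x \<otimes> y \<noteq> \<one>"
  shows "reduced (us @ (x \<otimes> y) # vs)"
proof -
  have x: "letter x" and y: "letter y"
    using us vs by (auto simp: reduced_append reduced_Cons)
  then have z: "letter (x \<otimes> y)" and "x \<otimes> y \<in> A \<longleftrightarrow> x \<in> A" "y \<in> A \<longleftrightarrow> x \<in> A"
    using letter_mult[OF x y xy] same_factor_iff[OF x y] xy by auto
  then have "same_factor p (x \<otimes> y) \<longleftrightarrow> same_factor p x" "same_factor (x \<otimes> y) p \<longleftrightarrow> same_factor y p"
    if "letter p" for p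
    using same_factor_iff that x y by (metis same_factor_commute)+
  then show ?thesis
    using us vs z reduced_letter[of us "last us"] reduced_letter[of vs "hd vs"]
    by (auto simp: reduced_append reduced_Cons)
qed

lemma max_defect_nonneg: "0 \<le> max DA DB"
  using fA_defect_bound[OF A_one A_one] by simp

lemma reduced_mult:
  assumes "reduced us" and "reduced vs"
  shows "\<exists>ws. reduced ws \<and> word_mult ws = word_mult us \<otimes> word_mult vs
    \<and> \<bar>word_value us + word_value vs - word_value ws\<bar> \<le> max DA DB"
  using assms
proof (induction us arbitrary: vs rule: rev_induct)
  case Nil
  then show ?case
    using max_defect_nonneg reduced_carrier word_mult_closed by (intro exI[of _ vs]) auto
next
  case (snoc x us)
  have us: "reduced us" and x: "letter x" and usG: "set us \<subseteq> carrier G"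
    using snoc.prems(1) reduced_carrier by (auto simp: reduced_append)
  have xG: "x \<in> carrier G"
    using x by (rule letter_carrier)
  show ?case
  proof (cases vs)
    case Nil
    then show ?thesis
      using snoc.prems max_defect_nonneg word_mult_closed[OF reduced_carrier[OF snoc.prems(1)]]
      by (intro exI[of _ "us @ [x]"]) auto
  next
    case (Cons y vs')
    have vs': "reduced vs'" and y: "letter y" and vsG: "set vs' \<subseteq> carrier G"
      using snoc.prems(2) reduced_carrier by (auto simp: Cons reduced_Cons)
    have yG: "y \<in> carrier G"
      using y by (rule letter_carrier)
    have mult_eq: "word_mult (us @ [x]) \<otimes> word_mult vs = word_mult us \<otimes> (x \<otimes> y) \<otimes> word_mult vs'"
      using usG vsG xG yG by (simp add: Cons word_mult_append word_mult_closed m_assoc)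
    consider "\<not> same_factor x y" | "same_factor x y" "x \<otimes> y = \<one>" | "same_factor x y" "x \<otimes> y \<noteq> \<one>"
      by blast
    then show ?thesis
    proof cases
      case 1
      then have "reduced (us @ [x] @ vs)"
        using snoc.prems by (simp add: reduced_append Cons)
      then show ?thesis
        using usG vsG xG yG max_defect_nonneg
        by (intro exI[of _ "us @ [x] @ vs"]) (simp add: Cons word_mult_append word_mult_closed m_assoc)
    next
      case 2
      then have "y = inv x"
        using inv_mult_cancel_left[of x y] xG yG by simp
      then have "word_value (us @ [x]) + word_value vs = word_value us + word_value vs'"
        using f_letter_inv x by (simp add: Cons letter_def)
      moreover have "word_mult (us @ [x]) \<otimes> word_mult vs = word_mult us \<otimes> word_mult vs'"
        using mult_eq 2 usG vsG by (simp add: word_mult_closed)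
      ultimately show ?thesis
        using snoc.IH[OF us vs'] by metis
    next
      case 3
      then have "reduced (us @ (x \<otimes> y) # vs')"
        using snoc.prems by (intro reduced_merge) (simp_all add: Cons)
      moreover have "word_mult (us @ (x \<otimes> y) # vs') = word_mult (us @ [x]) \<otimes> word_mult vs"
        using mult_eq usG vsG xG yG by (simp add: word_mult_append word_mult_closed m_assoc)
      moreover have "\<bar>word_value (us @ [x]) + word_value vs - word_value (us @ (x \<otimes> y) # vs')\<bar> \<le> max DA DB"
        using f_letter_merge[OF 3(1)] by (simp add: Cons abs_minus_commute)
      ultimately show ?thesis
        by blast
    qed
  qed
qed

lemma exists_reduced_word: "g \<in> carrier G \<Longrightarrow> \<exists>ws. reduced ws \<and> word_mult ws = g"
proof -
  let ?R = "\<lambda>g. \<exists>ws. reduced ws \<and> word_mult ws = g"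
  have factor: "?R x" if "x \<in> A \<or> x \<in> B" for x
  proof (cases "x = \<one>")
    case False
    then show ?thesis
      using that A_carrier B_carrier by (intro exI[of _ "[x]"]) (auto simp: letter_def)
  qed (auto intro: exI[of _ "[]"])
  have mult: "?R (g \<otimes> h)" if "?R g" "?R h" for g h
    using that reduced_mult by metis
  have "?R (word_prod G ps)" if "set ps \<subseteq> A \<times> B" for ps
    using that
  proof (induction ps)
    case (Cons p ps)
    then show ?case
      using mult[OF mult[OF factor factor]] by (cases p) auto
  qed (auto intro: exI[of _ "[]"])
  moreover assume "g \<in> carrier G"
  ultimately show ?thesis
    using free_product unfolding is_free_product_def nf_word_def
    by (cases "g = \<one>") (auto intro: exI[of _ "[]"])
qed

lemma split_qm_defect_bound:
  assumes "g \<in> carrier G" and "h \<in> carrier G"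
  shows "\<bar>f (g \<otimes> h) - f g - f h\<bar> \<le> max DA DB"
proof -
  obtain us vs where us: "reduced us" "word_mult us = g" and vs: "reduced vs" "word_mult vs = h"
    using exists_reduced_word assms by metis
  then obtain ws where ws: "reduced ws" "word_mult ws = g \<otimes> h"
    and "\<bar>word_value us + word_value vs - word_value ws\<bar> \<le> max DA DB"
    using reduced_mult by metis
  moreover have "f (g \<otimes> h) = word_value ws" "f g = word_value us" "f h = word_value vs"
    using split_qm_word_mult us vs ws by metis+
  ultimately show ?thesis
    by (simp add: abs_minus_commute)
qed

lemma split_qm_factor: "x \<in> A \<or> x \<in> B \<Longrightarrow> f x = f_letter x"
  using split_qm_word_mult[of "[x]"] fA_one fB_one
  by (cases "x = \<one>") (auto simp: letter_def split_qm_def f_letter_def A_carrier B_carrier)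

sublocale group_quasimorphism G f
  using split_qm_defect_bound by unfold_locales (rule quasimorphismI)

lemma reduced_concat_replicate:
  assumes "reduced w" and "w \<noteq> []" and "\<not> same_factor (last w) (hd w)"
  shows "reduced (concat (replicate n w))"
proof (induction n)
  case (Suc n)
  have "concat (replicate n w) \<noteq> [] \<Longrightarrow> hd (concat (replicate n w)) = hd w"
    using assms(2) by (cases n) auto
  then show ?case
    using Suc assms by (simp add: reduced_append)
qed simp

lemma word_mult_concat_replicate:
  assumes "set w \<subseteq> carrier G"
  shows "word_mult (concat (replicate n w)) = word_mult w [^] n"
proof (induction n)
  case (Suc n)
  have "word_mult (concat (replicate (Suc n) w)) = word_mult w \<otimes> word_mult w [^] n"
    using Suc assms word_mult_append[of w "concat (replicate n w)"] by (auto simp: set_replicate_conv_if)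
  then show ?case
    using nat_pow_Suc2 word_mult_closed[OF assms] by metis
qed simp

lemma homogenization_cyclically_reduced:
  assumes w: "reduced w" "w \<noteq> []" and cyclic: "\<not> same_factor (last w) (hd w)"
  shows "\<psi> (word_mult w) = word_value w"
proof (rule homogenization_eqI)
  fix n :: nat
  have "word_value (concat (replicate n w)) = real n * word_value w"
    by (induction n) (simp_all add: algebra_simps)
  then show "f (word_mult w [^] n) = real n * word_value w"
    using split_qm_word_mult[OF reduced_concat_replicate[OF w cyclic]]
      word_mult_concat_replicate[OF reduced_carrier[OF w(1)]] by simp
qed

lemma homogenization_defect_witness:
  assumes x: "letter x" and y: "letter y" and b: "letter b"
    and xy: "same_factor x y" "x \<otimes> y \<noteq> \<one>" and xb: "\<not> same_factor x b"
  obtains g h where "g \<in> carrier G" "h \<in> carrier G"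
    "\<psi> (g \<otimes> h) - \<psi> g - \<psi> h = 2 * (f_letter (x \<otimes> y) - f_letter x - f_letter y)"
proof -
  define z where "z = x \<otimes> y"
  have z: "letter z" "z \<in> A \<longleftrightarrow> x \<in> A"
    using letter_mult[OF x y xy] by (auto simp: z_def)
  have b': "letter (inv b)" "inv b \<in> A \<longleftrightarrow> b \<in> A"
    using letter_inv[OF b] by auto
  have factors: "y \<in> A \<longleftrightarrow> x \<in> A" "b \<in> A \<longleftrightarrow> x \<notin> A"
    using same_factor_iff[OF x y] same_factor_iff[OF x b] xy xb by auto
  note same = same_factor_iff[OF x] same_factor_iff[OF y] same_factor_iff[OF b]
    same_factor_iff[OF z(1)] same_factor_iff[OF b'(1)]
  have "\<psi> (word_mult [y, b, x, b]) = f_letter y + f_letter b + f_letter x + f_letter b"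
    using x y b factors by (subst homogenization_cyclically_reduced) (auto simp: same)
  moreover have "\<psi> (word_mult [inv b, y, inv b, x]) = - f_letter b + f_letter y - f_letter b + f_letter x"
    using x y b b' factors f_letter_inv[of b]
    by (subst homogenization_cyclically_reduced) (auto simp: same letter_def)
  moreover have "\<psi> (word_mult [y, b, x, b] \<otimes> word_mult [inv b, y, inv b, x]) = 2 * f_letter z"
  proof -
    have G: "x \<in> carrier G" "y \<in> carrier G" "b \<in> carrier G"
      using x y b letter_carrier by auto
    then have "word_mult [y, b, x, b] \<otimes> word_mult [inv b, y, inv b, x]
        = inv x \<otimes> word_mult [z, b, z, inv b] \<otimes> inv (inv x)"
      by (simp add: z_def m_assoc mult_inv_cancel_left inv_mult_cancel_left)
    moreover have "\<psi> (word_mult [z, b, z, inv b]) = 2 * f_letter z"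
      using z b b' factors f_letter_inv[of b]
      by (subst homogenization_cyclically_reduced) (auto simp: same letter_def)
    ultimately show ?thesis
      using homogenization_conj[of "inv x" "word_mult [z, b, z, inv b]"] G z(1) letter_carrier
      by simp
  qed
  ultimately show ?thesis
    using that[of "word_mult [y, b, x, b]" "word_mult [inv b, y, inv b, x]"] x y b letter_carrier
    by (simp add: z_def)
qed

lemma twice_f_letter_defect_le:
  assumes H: "H = A \<or> H = B" and xy: "x \<in> H" "y \<in> H" and b: "b \<in> A \<or> b \<in> B" "b \<notin> H"
  shows "2 * \<bar>f_letter (x \<otimes> y) - f_letter x - f_letter y\<bar> \<le> defect G \<psi>"
proof (cases "x = \<one> \<or> y = \<one> \<or> x \<otimes> y = \<one>")
  case True
  have "x \<in> A \<or> x \<in> B" "x \<in> carrier G" "y \<in> carrier G"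
    using H xy A_carrier B_carrier by auto
  then have "f_letter (x \<otimes> y) - f_letter x - f_letter y = 0"
    using True f_letter_inv[of x] inv_mult_cancel_left[of x y] A_one
    by (auto simp: f_letter_A fA_one)
  then show ?thesis
    using abs_le_defect[OF quasimorphism_homogenization, of \<one> \<one>] by simp
next
  case False
  have letters: "letter x" "letter y" "letter b"
    using H xy b False A_one B_one by (auto simp: letter_def)
  moreover have "same_factor x y" "\<not> same_factor x b"
    using H xy b False factors_disjoint by (auto simp: same_factor_def)
  ultimately obtain g h where gh: "g \<in> carrier G" "h \<in> carrier G"
    and "\<psi> (g \<otimes> h) - \<psi> g - \<psi> h = 2 * (f_letter (x \<otimes> y) - f_letter x - f_letter y)"
    using homogenization_defect_witness False by blast
  then have "2 * \<bar>f_letter (x \<otimes> y) - f_letter x - f_letter y\<bar> = \<bar>\<psi> (g \<otimes> h) - \<psi> g - \<psi> h\<bar>"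
    by (simp only: abs_mult)
  then show ?thesis
    using abs_le_defect[OF quasimorphism_homogenization gh] by simp
qed

lemma factor_eq_f_letter: "(H, fH) \<in> {(A, fA), (B, fB)} \<Longrightarrow> x \<in> H \<Longrightarrow> fH x = f_letter x"
  using f_letter_A f_letter_B by auto

lemma factor_subgroup: "(H, fH) \<in> {(A, fA), (B, fB)} \<Longrightarrow> subgroup H G"
  using subgroup_A subgroup_B by auto

lemma factor_defect_le:
  assumes "(H, fH) \<in> {(A, fA), (B, fB)}"
  shows "defect (G\<lparr>carrier := H\<rparr>) fH \<le> D"
proof (rule defect_le)
  show "carrier (G\<lparr>carrier := H\<rparr>) \<noteq> {}"
    using subgroup.one_closed[OF factor_subgroup[OF assms]] by auto
  fix x y
  assume "x \<in> carrier (G\<lparr>carrier := H\<rparr>)" "y \<in> carrier (G\<lparr>carrier := H\<rparr>)"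
  then have H: "x \<in> H" "y \<in> H" "x \<otimes> y \<in> H"
    using subgroup.m_closed[OF factor_subgroup[OF assms]] by auto
  moreover have "H \<subseteq> A \<union> B"
    using assms by auto
  ultimately have "fH (x \<otimes> y) = f (x \<otimes> y)" "fH x = f x" "fH y = f y"
    using factor_eq_f_letter[OF assms] split_qm_factor by auto
  moreover have "x \<in> carrier G" "y \<in> carrier G"
    using H subgroup.mem_carrier[OF factor_subgroup[OF assms]] by auto
  ultimately show "\<bar>fH (x \<otimes>\<^bsub>G\<lparr>carrier := H\<rparr>\<^esub> y) - fH x - fH y\<bar> \<le> D"
    using defect_bound by simp
qed

lemma twice_factor_defect_le:
  assumes "(H, fH) \<in> {(A, fA), (B, fB)}" and "(A \<union> B) - H \<noteq> {}"
  shows "2 * defect (G\<lparr>carrier := H\<rparr>) fH \<le> defect G \<psi>"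
proof -
  have "defect (G\<lparr>carrier := H\<rparr>) fH \<le> defect G \<psi> / 2"
  proof (rule defect_le)
    show "carrier (G\<lparr>carrier := H\<rparr>) \<noteq> {}"
      using subgroup.one_closed[OF factor_subgroup[OF assms(1)]] by auto
    fix x y
    assume "x \<in> carrier (G\<lparr>carrier := H\<rparr>)" "y \<in> carrier (G\<lparr>carrier := H\<rparr>)"
    then have "x \<in> H" "y \<in> H" "x \<otimes> y \<in> H"
      using subgroup.m_closed[OF factor_subgroup[OF assms(1)]] by auto
    moreover obtain b where "b \<in> A \<or> b \<in> B" "b \<notin> H"
      using assms(2) by blast
    moreover have "H = A \<or> H = B"
      using assms(1) by auto
    ultimately show "\<bar>fH (x \<otimes>\<^bsub>G\<lparr>carrier := H\<rparr>\<^esub> y) - fH x - fH y\<bar> \<le> defect G \<psi> / 2"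
      using twice_f_letter_defect_le[of H x y b] factor_eq_f_letter[OF assms(1)] by simp
  qed
  then show ?thesis
    by simp
qed

end

theorem theorem3p3:
  fixes G :: "('a, 'b) monoid_scheme" and A B :: "'a set" and fA fB :: "'a \<Rightarrow> real"
  assumes "is_free_product G A B"
    and "A \<noteq> {\<one>\<^bsub>G\<^esub>}" and "B \<noteq> {\<one>\<^bsub>G\<^esub>}"
    and "quasimorphism (G\<lparr>carrier := A\<rparr>) fA" and "alternating (G\<lparr>carrier := A\<rparr>) fA"
    and "quasimorphism (G\<lparr>carrier := B\<rparr>) fB" and "alternating (G\<lparr>carrier := B\<rparr>) fB"
  shows "quasimorphism G (split_qm G A B fA fB)
    \<and> gromov_norm_class G (split_qm G A B fA fB)
        = defect G (homogenization G (split_qm G A B fA fB)) / 2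
    \<and> defect G (homogenization G (split_qm G A B fA fB)) / 2 = defect G (split_qm G A B fA fB)
    \<and> defect G (split_qm G A B fA fB)
        = max (defect (G\<lparr>carrier := A\<rparr>) fA) (defect (G\<lparr>carrier := B\<rparr>) fB)
    \<and> (\<forall>\<beta>. bounded_fun G \<beta> \<longrightarrow>
          defect G (split_qm G A B fA fB) \<le> defect G (\<lambda>g. split_qm G A B fA fB g + \<beta> g))"
proof -
  have "group G"
    using assms(1) by (simp add: is_free_product_def)
  interpret free_product_split G A B fA fB
    using assms \<open>group G\<close> by (simp add: free_product_split_def free_product_split_axioms_def)
  have A: "(A, fA) \<in> {(A, fA), (B, fB)}" and B: "(B, fB) \<in> {(A, fA), (B, fB)}"
    by simp_all
  have "(A \<union> B) - B \<noteq> {}" and "(A \<union> B) - A \<noteq> {}"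
    using assms(2,3) A_one B_one factors_disjoint by blast+
  note twice_le = twice_factor_defect_le[OF A this(2)] twice_factor_defect_le[OF B this(1)]
  have defect_f: "defect G f = max DA DB"
  proof (rule antisym)
    show "defect G f \<le> max DA DB"
      using split_qm_defect_bound one_closed by (intro defect_le) blast+
    show "max DA DB \<le> defect G f"
      using factor_defect_le[OF A] factor_defect_le[OF B] by simp
  qed
  have defect_\<psi>: "defect G (homogenization G f) = 2 * defect G f"
    using defect_homogenization_le twice_le defect_f by linarith
  show ?thesis
    using quasimorphism gromov_norm_class_ge gromov_norm_class_le_defect
      defect_homogenization_le_add_bounded defect_f defect_\<psi>
    by auto
qed

end
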